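(* For every positive integer $n$, the map sending a minimal cover $\{S_1,\dots,S_k\}$ of $[n]$ to the undirected graph on $[n]$ in which distinct $v,w$ are adjacent iff $v,w\in S_i$ for some $i$, is a bijection from the set of minimal covers of $[n]$ onto the set of UEC-representatives on vertex set $[n]$.
   Context: A minimal cover of a finite set $S$ is a collection $\{S_1,\dots,S_k\}$ of nonempty subsets of $S$ such that for $T\subseteq[k]$ we have $\bigcup_{i\in T}S_i=S$ iff $T=[k]$. For a DAG $\mathcal{D}$, a trek is a path with no repeated vertices and no collider; the unconditional dependence graph $\mathcal{U}^\mathcal{D}$ is the undirected graph on the nodes of $\mathcal{D}$ in which distinct $v,w$ are adjacent iff there is a trek between them. An undirected graph on $[n]$ is a UEC-representative if it equals $\mathcal{U}^\mathcal{D}$ for some DAG $\mathcal{D}$ on $[n]$. *)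

theory Defs
  imports Main
begin

definition minimal_cover :: "'a set \<Rightarrow> 'a set set \<Rightarrow> bool" where
  "minimal_cover S C \<longleftrightarrow>
     (\<forall>A\<in>C. A \<noteq> {} \<and> A \<subseteq> S) \<and>
     (\<forall>T. T \<subseteq> C \<longrightarrow> (\<Union>T = S \<longleftrightarrow> T = C))"

text \<open>Undirected graphs on a fixed vertex set are represented by their edge sets,
  each edge being a two-element set {v,w}.\<close>
definition cover_graph :: "'a set set \<Rightarrow> 'a set set" where
  "cover_graph C = {{v, w} | v w. v \<noteq> w \<and> (\<exists>A\<in>C. v \<in> A \<and> w \<in> A)}"

definition dag_on :: "'a set \<Rightarrow> ('a \<times> 'a) set \<Rightarrow> bool" where
  "dag_on V D \<longleftrightarrow> D \<subseteq> V \<times> V \<and> acyclic D"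

definition is_trek :: "('a \<times> 'a) set \<Rightarrow> 'a list \<Rightarrow> bool" where
  "is_trek D p \<longleftrightarrow> p \<noteq> [] \<and> distinct p \<and>
     (\<forall>i. Suc i < length p \<longrightarrow> (p!i, p!Suc i) \<in> D \<or> (p!Suc i, p!i) \<in> D) \<and>
     (\<forall>i. 0 < i \<and> Suc i < length p \<longrightarrow>
          \<not> ((p!(i - 1), p!i) \<in> D \<and> (p!Suc i, p!i) \<in> D))"

definition trek_between :: "('a \<times> 'a) set \<Rightarrow> 'a \<Rightarrow> 'a \<Rightarrow> bool" where
  "trek_between D v w \<longleftrightarrow> (\<exists>p. is_trek D p \<and> hd p = v \<and> last p = w)"

definition udg :: "'a set \<Rightarrow> ('a \<times> 'a) set \<Rightarrow> 'a set set" where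
  "udg V D = {{v, w} | v w. v \<in> V \<and> w \<in> V \<and> v \<noteq> w \<and> trek_between D v w}"

definition UEC_representative :: "nat \<Rightarrow> nat set set \<Rightarrow> bool" where
  "UEC_representative n G \<longleftrightarrow> (\<exists>D. dag_on {1..n} D \<and> G = udg {1..n} D)"

end

(*
  For an acyclic D there is a trek between v and w iff v and w have a common ancestor:
  a trek climbs to a top vertex and then only descends, and conversely two directed walks
  from a common ancestor of minimal total length meet only at their start and glue to a
  trek. So the dependence graph of a DAG joins v and w iff both descend from a common
  source, i.e. it is the graph of the cover by the descendant sets of the sources, which
  is minimal because each source lies only in its own set. Conversely, the graph of a
  minimal cover is realised by orienting every member as a star out of a private point.
  Finally, a minimal cover is recovered from its graph as the set of those closed
  neighbourhoods that are cliques: the closed neighbourhood of a private point is its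
  member, and a clique neighbourhood of v forces v into a single member.
*)

theory Submission
  imports Defs
begin

subsection \<open>Treks and common ancestors\<close>

definition common_ancestor :: "('a \<times> 'a) set \<Rightarrow> 'a \<Rightarrow> 'a \<Rightarrow> bool" where
  "common_ancestor D v w \<longleftrightarrow> (\<exists>t. (t, v) \<in> D\<^sup>* \<and> (t, w) \<in> D\<^sup>*)"

lemma trek_common_ancestor:
  assumes "is_trek D p"
  shows "common_ancestor D (hd p) (last p)"
proof -
  have ne: "p \<noteq> []" using assms by (simp add: is_trek_def)
  have step: "(p!i, p!Suc i) \<in> D \<or> (p!Suc i, p!i) \<in> D" if "Suc i < length p" for i
    using assms that by (simp add: is_trek_def)
  have no_collider: "\<not> ((p!(i - 1), p!i) \<in> D \<and> (p!Suc i, p!i) \<in> D)"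
    if "0 < i" "Suc i < length p" for i
    using assms that by (simp add: is_trek_def)
  \<comment> \<open>A trek climbs to its top vertex and then only descends: once an edge has been
    traversed forwards, the absence of colliders forbids going backwards again.\<close>
  have climb_or_descend:
    "(p!l, p!0) \<in> D\<^sup>* \<or> (0 < l \<and> (p!(l - 1), p!l) \<in> D \<and> common_ancestor D (p!0) (p!l))"
    if "l < length p" for l
    using that
  proof (induction l)
    case (Suc l)
    then have IH: "(p!l, p!0) \<in> D\<^sup>* \<or> (0 < l \<and> (p!(l - 1), p!l) \<in> D \<and> common_ancestor D (p!0) (p!l))"
      by simp
    consider (forward) "(p!l, p!Suc l) \<in> D" | (backward) "(p!Suc l, p!l) \<in> D"
      using step[OF Suc.prems] by blast
    then show ?case
    proof cases
      case forward
      with IH have "common_ancestor D (p!0) (p!Suc l)"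
        unfolding common_ancestor_def by (meson rtrancl.rtrancl_refl rtrancl_into_rtrancl)
      with forward show ?thesis by simp
    next
      case backward
      with IH no_collider[of l] Suc.prems have "(p!l, p!0) \<in> D\<^sup>*" by auto
      with backward show ?thesis by (meson converse_rtrancl_into_rtrancl)
    qed
  qed simp
  have "common_ancestor D (p!0) (p!(length p - 1))"
    using climb_or_descend[of "length p - 1"] ne unfolding common_ancestor_def by auto
  then show ?thesis using ne by (simp add: hd_conv_nth last_conv_nth)
qed

definition directed_walk :: "('a \<times> 'a) set \<Rightarrow> (nat \<Rightarrow> 'a) \<Rightarrow> nat \<Rightarrow> bool" where
  "directed_walk D f m \<longleftrightarrow> (\<forall>i<m. (f i, f (Suc i)) \<in> D)"

lemma rtrancl_directed_walk:
  "(a, b) \<in> D\<^sup>* \<longleftrightarrow> (\<exists>f m. f 0 = a \<and> f m = b \<and> directed_walk D f m)"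
  unfolding rtrancl_power relpow_fun_conv directed_walk_def by blast

lemma directed_walk_drop:
  "directed_walk D f m \<Longrightarrow> directed_walk D (\<lambda>l. f (i + l)) (m - i)"
  by (simp add: directed_walk_def)

lemma directed_walk_trancl:
  assumes "directed_walk D f m" "i < j" "j \<le> m"
  shows "(f i, f j) \<in> D\<^sup>+"
  using assms(2,3)
proof (induction j)
  case (Suc j)
  have "(f j, f (Suc j)) \<in> D" using assms(1) Suc.prems by (simp add: directed_walk_def)
  with Suc show ?case by (cases "i = j") auto
qed simp

lemma directed_walk_inj_on:
  assumes "acyclic D" "directed_walk D f m"
  shows "inj_on f {..m}"
proof (rule linorder_inj_onI)
  fix i j assume "i < j" "i \<in> {..m}" "j \<in> {..m}"
  then have "(f i, f j) \<in> D\<^sup>+" using directed_walk_trancl[OF assms(2)] by simp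
  then show "f i \<noteq> f j" using assms(1) by (auto simp: acyclic_def)
qed auto

lemma acyclic_no_2cycle: "acyclic D \<Longrightarrow> (a, b) \<in> D \<Longrightarrow> (b, a) \<notin> D"
  by (meson acyclic_def r_into_trancl' trancl_into_trancl2)

text \<open>Reversing the first walk and appending the second gives a path on which every
  edge points away from the common start, so no vertex is a collider; distinctness of the
  vertices is where acyclicity and the disjointness hypothesis enter.\<close>

lemma disjoint_walks_trek:
  assumes acyc: "acyclic D"
    and f: "directed_walk D f m" and g: "directed_walk D g k" and start: "f 0 = g 0"
    and meet: "\<And>i j. i \<le> m \<Longrightarrow> j \<le> k \<Longrightarrow> f i = g j \<Longrightarrow> i = 0 \<and> j = 0"
  shows "trek_between D (f m) (g k)"
proof -
  define h where "h l = (if l \<le> m then f (m - l) else g (l - m))" for l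
  define p where "p = map h [0..<m + k + 1]"
  have len: "length p = m + k + 1" by (simp add: p_def)
  then have "p \<noteq> []" by auto
  have nth_p: "p ! l = h l" if "l < m + k + 1" for l using that by (simp add: p_def del: upt_Suc)
  have inj_f: "inj_on f {..m}" and inj_g: "inj_on g {..k}"
    using directed_walk_inj_on[OF acyc] f g by blast+
  have "inj_on h {0..<m + k + 1}"
  proof (rule inj_onI)
    fix a b assume ab: "a \<in> {0..<m + k + 1}" "b \<in> {0..<m + k + 1}" "h a = h b"
    show "a = b"
    proof (cases "a \<le> m"; cases "b \<le> m")
      assume "a \<le> m" "b \<le> m"
      then show ?thesis using inj_onD[OF inj_f, of "m - a" "m - b"] ab by (simp add: h_def)
    next
      assume "a \<le> m" "\<not> b \<le> m"
      then show ?thesis using meet[of "m - a" "b - m"] ab by (simp add: h_def) linarith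
    next
      assume "\<not> a \<le> m" "b \<le> m"
      then show ?thesis using meet[of "m - b" "a - m"] ab by (simp add: h_def) linarith
    next
      assume "\<not> a \<le> m" "\<not> b \<le> m"
      then show ?thesis using inj_onD[OF inj_g, of "a - m" "b - m"] ab by (simp add: h_def) linarith
    qed
  qed
  then have "distinct p" by (simp add: p_def distinct_map del: upt_Suc)
  have backward: "(h (Suc l), h l) \<in> D" if "l < m" for l
    using f that by (auto simp: h_def directed_walk_def Suc_diff_Suc[symmetric])
  have forward: "(h l, h (Suc l)) \<in> D" if "m \<le> l" "l < m + k" for l
    using g start that by (cases "l = m") (auto simp: h_def directed_walk_def Suc_diff_le)
  have "is_trek D p"
    unfolding is_trek_def
  proof (intro conjI allI impI)
    show "p \<noteq> []" "distinct p" by fact+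
  next
    fix i assume "Suc i < length p"
    then show "(p!i, p!Suc i) \<in> D \<or> (p!Suc i, p!i) \<in> D"
      using backward[of i] forward[of i] len nth_p[of i] nth_p[of "Suc i"] by (cases "i < m") auto
  next
    fix i assume i: "0 < i \<and> Suc i < length p"
    show "\<not> ((p!(i - 1), p!i) \<in> D \<and> (p!Suc i, p!i) \<in> D)"
    proof (cases "i < m")
      case True
      then have "(h i, h (i - 1)) \<in> D" using backward[of "i - 1"] i by simp
      then show ?thesis using acyclic_no_2cycle[OF acyc] i len nth_p[of i] nth_p[of "i - 1"] by auto
    next
      case False
      then have "(h i, h (Suc i)) \<in> D" using forward[of i] i len by simp
      then show ?thesis using acyclic_no_2cycle[OF acyc] i len nth_p[of i] nth_p[of "Suc i"] by auto
    qed
  qed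
  moreover have "hd p = f m" using \<open>p \<noteq> []\<close> nth_p[of 0] by (simp add: hd_conv_nth h_def)
  moreover have "last p = g k"
    using \<open>p \<noteq> []\<close> len nth_p[of "m + k"] start by (cases "k = 0") (simp_all add: last_conv_nth h_def)
  ultimately show ?thesis unfolding trek_between_def by blast
qed

text \<open>Among all pairs of walks from a common ancestor, one of minimal total length can
  meet only at its start, since a later meeting point would be a nearer common ancestor.\<close>

lemma common_ancestor_trek:
  assumes acyc: "acyclic D" and "common_ancestor D v w"
  shows "trek_between D v w"
proof -
  define walks where "walks N \<longleftrightarrow> (\<exists>f g m k. m + k = N \<and> f 0 = g 0 \<and> f m = v \<and> g k = w \<and>
    directed_walk D f m \<and> directed_walk D g k)" for N
  have "\<exists>N. walks N"
    using assms(2) unfolding common_ancestor_def walks_def rtrancl_directed_walk by metis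
  then have "walks (LEAST N. walks N)" by (rule LeastI_ex)
  then obtain f g m k where fg: "m + k = (LEAST N. walks N)" "f 0 = g 0" "f m = v" "g k = w"
    "directed_walk D f m" "directed_walk D g k"
    unfolding walks_def by blast
  have "i = 0 \<and> j = 0" if "i \<le> m" "j \<le> k" "f i = g j" for i j
  proof (rule ccontr)
    assume "\<not> (i = 0 \<and> j = 0)"
    then have "(m - i) + (k - j) < (LEAST N. walks N)" using that fg(1) by linarith
    moreover have "walks ((m - i) + (k - j))"
      unfolding walks_def
      by (rule exI[of _ "\<lambda>l. f (i + l)"], rule exI[of _ "\<lambda>l. g (j + l)"],
          rule exI[of _ "m - i"], rule exI[of _ "k - j"],
          use that fg directed_walk_drop[OF fg(5)] directed_walk_drop[OF fg(6)] in auto)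
    ultimately show False by (auto dest: not_less_Least)
  qed
  with disjoint_walks_trek[OF acyc fg(5,6,2)] fg(3,4) show ?thesis by blast
qed

lemma trek_between_iff_common_ancestor:
  assumes "acyclic D"
  shows "trek_between D v w \<longleftrightarrow> common_ancestor D v w"
proof
  assume "trek_between D v w"
  then obtain p where "is_trek D p" "hd p = v" "last p = w" unfolding trek_between_def by blast
  then show "common_ancestor D v w" using trek_common_ancestor by blast
qed (rule common_ancestor_trek[OF assms])

lemma cover_graph_eq_udgI:
  assumes "acyclic D"
    and "\<And>v w. v \<noteq> w \<Longrightarrow> (\<exists>A\<in>C. v \<in> A \<and> w \<in> A) \<longleftrightarrow> v \<in> V \<and> w \<in> V \<and> common_ancestor D v w"
  shows "cover_graph C = udg V D"
proof -
  have "v \<noteq> w \<and> (\<exists>A\<in>C. v \<in> A \<and> w \<in> A) \<longleftrightarrow> v \<in> V \<and> w \<in> V \<and> v \<noteq> w \<and> common_ancestor D v w"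
    for v w
    using assms(2) by blast
  then show ?thesis
    unfolding cover_graph_def udg_def trek_between_iff_common_ancestor[OF assms(1)] by simp
qed

subsection \<open>A minimal cover is determined by its graph\<close>

lemma minimal_cover_Union: "minimal_cover S C \<Longrightarrow> \<Union>C = S"
  unfolding minimal_cover_def by (metis order_refl)

lemma minimal_cover_subset:
  assumes "minimal_cover S C" "A \<in> C"
  shows "A \<subseteq> S"
  using assms(1)[unfolded minimal_cover_def, THEN conjunct1] assms(2) by blast

lemma minimal_cover_private_point:
  assumes "minimal_cover S C" "A \<in> C"
  obtains p where "p \<in> A" "\<And>B. B \<in> C \<Longrightarrow> p \<in> B \<Longrightarrow> B = A"
proof -
  have "\<Union>(C - {A}) \<noteq> S"
    using assms unfolding minimal_cover_def by (metis Diff_iff Diff_subset insertI1)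
  then obtain p where "p \<in> \<Union>C" "p \<notin> \<Union>(C - {A})" using minimal_cover_Union[OF assms(1)] by blast
  then show ?thesis using that by blast
qed

definition closed_nbhd :: "'a set set \<Rightarrow> 'a \<Rightarrow> 'a set" where
  "closed_nbhd G v = insert v {w. {v, w} \<in> G}"

definition clique :: "'a set set \<Rightarrow> 'a set \<Rightarrow> bool" where
  "clique G A \<longleftrightarrow> (\<forall>a\<in>A. \<forall>b\<in>A. a \<noteq> b \<longrightarrow> {a, b} \<in> G)"

definition clique_nbhds :: "'a set \<Rightarrow> 'a set set \<Rightarrow> 'a set set" where
  "clique_nbhds S G = {closed_nbhd G v | v. v \<in> S \<and> clique G (closed_nbhd G v)}"

lemma cover_graph_edge: "{v, w} \<in> cover_graph C \<longleftrightarrow> v \<noteq> w \<and> (\<exists>A\<in>C. v \<in> A \<and> w \<in> A)"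
  unfolding cover_graph_def by (auto simp: doubleton_eq_iff)

lemma closed_nbhd_cover_graph: "closed_nbhd (cover_graph C) v = insert v (\<Union>{A\<in>C. v \<in> A})"
  unfolding closed_nbhd_def cover_graph_edge by auto

lemma clique_cover_graph: "A \<in> C \<Longrightarrow> clique (cover_graph C) A"
  unfolding clique_def cover_graph_edge by auto

lemma closed_nbhd_private_point:
  assumes "p \<in> A" "A \<in> C" "\<And>B. B \<in> C \<Longrightarrow> p \<in> B \<Longrightarrow> B = A"
  shows "closed_nbhd (cover_graph C) p = A"
  using assms unfolding closed_nbhd_cover_graph by blast

lemma clique_closed_nbhd_in_cover:
  assumes mc: "minimal_cover S C" and "v \<in> S"
    and cl: "clique (cover_graph C) (closed_nbhd (cover_graph C) v)"
  shows "closed_nbhd (cover_graph C) v \<in> C"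
proof -
  obtain A where A: "A \<in> C" "v \<in> A" using minimal_cover_Union[OF mc] \<open>v \<in> S\<close> by blast
  \<comment> \<open>The private points of two members containing v are adjacent, so they share a member.\<close>
  have "B = A" if B: "B \<in> C" "v \<in> B" for B
  proof -
    obtain p where p: "p \<in> A" "\<And>A'. A' \<in> C \<Longrightarrow> p \<in> A' \<Longrightarrow> A' = A"
      using minimal_cover_private_point[OF mc A(1)] by blast
    obtain q where q: "q \<in> B" "\<And>B'. B' \<in> C \<Longrightarrow> q \<in> B' \<Longrightarrow> B' = B"
      using minimal_cover_private_point[OF mc B(1)] by blast
    have "p \<in> closed_nbhd (cover_graph C) v" "q \<in> closed_nbhd (cover_graph C) v"
      using A B p(1) q(1) unfolding closed_nbhd_cover_graph by auto
    then have "p = q \<or> (\<exists>E\<in>C. p \<in> E \<and> q \<in> E)"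
      using cl unfolding clique_def cover_graph_edge by blast
    then show "B = A"
    proof
      assume "p = q"
      then show "B = A" using p(2) q(1) B(1) by blast
    next
      assume "\<exists>E\<in>C. p \<in> E \<and> q \<in> E"
      then obtain E where "E \<in> C" "p \<in> E" "q \<in> E" by blast
      then show "B = A" using p(2) q(2) by metis
    qed
  qed
  then have "closed_nbhd (cover_graph C) v = A" using A unfolding closed_nbhd_cover_graph by blast
  with A show ?thesis by simp
qed

lemma clique_nbhds_cover_graph:
  assumes mc: "minimal_cover S C"
  shows "clique_nbhds S (cover_graph C) = C"
proof
  show "clique_nbhds S (cover_graph C) \<subseteq> C"
    using clique_closed_nbhd_in_cover[OF mc] unfolding clique_nbhds_def by blast
  show "C \<subseteq> clique_nbhds S (cover_graph C)"
  proof
    fix A assume A: "A \<in> C"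
    obtain p where p: "p \<in> A" "\<And>B. B \<in> C \<Longrightarrow> p \<in> B \<Longrightarrow> B = A"
      using minimal_cover_private_point[OF mc A] by blast
    have "closed_nbhd (cover_graph C) p = A" using closed_nbhd_private_point[OF p(1) A p(2)] .
    moreover have "p \<in> S" using minimal_cover_subset[OF mc A] p(1) by blast
    ultimately show "A \<in> clique_nbhds S (cover_graph C)"
      using clique_cover_graph[OF A] unfolding clique_nbhds_def by force
  qed
qed

lemma inj_on_cover_graph: "inj_on cover_graph {C. minimal_cover S C}"
  by (rule inj_onI) (metis mem_Collect_eq clique_nbhds_cover_graph)

subsection \<open>From minimal covers to DAGs and back\<close>

lemma minimal_cover_star_dag:
  assumes mc: "minimal_cover S C"
    and rep: "\<And>A. A \<in> C \<Longrightarrow> r A \<in> A"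
    and private_rep: "\<And>A B. A \<in> C \<Longrightarrow> B \<in> C \<Longrightarrow> r A \<in> B \<Longrightarrow> B = A"
  defines "D \<equiv> {(r A, w) | A w. A \<in> C \<and> w \<in> A \<and> w \<noteq> r A}"
  shows "dag_on S D" "cover_graph C = udg S D"
proof -
  have "(y, z) \<notin> D" if "(x, y) \<in> D" for x y z
    using that rep private_rep unfolding D_def by fastforce
  then have "trans D" unfolding trans_def by blast
  then have trancl: "D\<^sup>+ = D" by simp
  then have acyc: "acyclic D" unfolding acyclic_def by (auto simp: D_def)
  then show "dag_on S D"
    unfolding dag_on_def using minimal_cover_subset[OF mc] rep by (auto simp: D_def)
  have rtrancl: "D\<^sup>* = D \<union> Id" by (simp add: rtrancl_trancl_reflcl trancl)
  have star: "\<exists>A\<in>C. x = r A \<and> x \<in> A \<and> y \<in> A" if "(x, y) \<in> D" for x y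
    using that rep unfolding D_def by blast
  show "cover_graph C = udg S D"
  proof (rule cover_graph_eq_udgI[OF acyc])
    fix v w :: 'a assume "v \<noteq> w"
    show "(\<exists>A\<in>C. v \<in> A \<and> w \<in> A) \<longleftrightarrow> v \<in> S \<and> w \<in> S \<and> common_ancestor D v w"
    proof
      assume "\<exists>A\<in>C. v \<in> A \<and> w \<in> A"
      then obtain A where A: "A \<in> C" "v \<in> A" "w \<in> A" by blast
      then have "(r A, v) \<in> D\<^sup>*" "(r A, w) \<in> D\<^sup>*" unfolding rtrancl D_def by auto
      then show "v \<in> S \<and> w \<in> S \<and> common_ancestor D v w"
        using A minimal_cover_subset[OF mc] unfolding common_ancestor_def by blast
    next
      assume "v \<in> S \<and> w \<in> S \<and> common_ancestor D v w"
      then obtain t where "(t, v) \<in> D \<union> Id" "(t, w) \<in> D \<union> Id"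
        unfolding common_ancestor_def rtrancl by blast
      then consider "t = v" "(t, w) \<in> D" | "t = w" "(t, v) \<in> D" | (fork) "(t, v) \<in> D" "(t, w) \<in> D"
        using \<open>v \<noteq> w\<close> by auto
      then show "\<exists>A\<in>C. v \<in> A \<and> w \<in> A"
      proof cases
        case fork
        then obtain A B where "A \<in> C" "B \<in> C" "t = r A" "t = r B" "v \<in> A" "w \<in> B"
          using star by metis
        then show ?thesis using rep private_rep by metis
      qed (use star in blast)+
    qed
  qed
qed

lemma minimal_cover_udg:
  assumes "minimal_cover S C"
  obtains D where "dag_on S D" "cover_graph C = udg S D"
proof -
  have "\<forall>A\<in>C. \<exists>p. p \<in> A \<and> (\<forall>B\<in>C. p \<in> B \<longrightarrow> B = A)"
    using minimal_cover_private_point[OF assms] by metis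
  then obtain r where "\<forall>A\<in>C. r A \<in> A \<and> (\<forall>B\<in>C. r A \<in> B \<longrightarrow> B = A)" by (metis bchoice)
  then show ?thesis using minimal_cover_star_dag[OF assms, of r] that by blast
qed

lemma wf_source_ancestor: "wf D \<Longrightarrow> \<exists>s. (s, v) \<in> D\<^sup>* \<and> s \<notin> Range D"
proof (induction v rule: wf_induct_rule)
  case (less v)
  show ?case
  proof (cases "v \<in> Range D")
    case True
    then obtain x where "(x, v) \<in> D" by blast
    with less obtain s where "(s, x) \<in> D\<^sup>*" "s \<notin> Range D" by blast
    with \<open>(x, v) \<in> D\<close> show ?thesis by (meson rtrancl_into_rtrancl)
  qed auto
qed

text \<open>A source is a private point of its own descendant set, which makes the cover minimal.\<close>

lemma source_descendants_minimal_cover: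
  assumes DS: "D \<subseteq> S \<times> S" and wf: "wf D"
  defines "C \<equiv> (\<lambda>s. D\<^sup>* `` {s}) ` (S - Range D)"
  shows "minimal_cover S C" "cover_graph C = udg S D"
proof -
  have descendant_in: "v \<in> S" if "(s, v) \<in> D\<^sup>*" "s \<in> S" for s v
    using that by (induction rule: rtrancl_induct) (use DS in auto)
  have ancestor_in: "t \<in> S" if "(t, v) \<in> D\<^sup>*" "v \<in> S" for t v
    using that by (induction rule: converse_rtrancl_induct) (use DS in auto)
  have source_ancestor: "\<exists>s\<in>S - Range D. (s, v) \<in> D\<^sup>*" if "v \<in> S" for v
    using wf_source_ancestor[OF wf, of v] ancestor_in[OF _ that] by blast
  have source_root: "t = s" if "s \<notin> Range D" "(t, s) \<in> D\<^sup>*" for s t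
    using that(2) by (cases rule: rtranclE) (use that(1) in auto)
  have Union: "\<Union>C = S" unfolding C_def using descendant_in source_ancestor by blast
  show "minimal_cover S C"
    unfolding minimal_cover_def
  proof (intro conjI ballI allI impI iffI)
    fix A assume "A \<in> C"
    then show "A \<noteq> {}" "A \<subseteq> S" unfolding C_def using descendant_in by auto
  next
    fix T assume T: "T \<subseteq> C" "\<Union>T = S"
    have "D\<^sup>* `` {s} \<in> T" if s: "s \<in> S - Range D" for s
    proof -
      obtain B where "B \<in> T" "s \<in> B" using T(2) s by blast
      moreover obtain s' where "B = D\<^sup>* `` {s'}" using T(1) \<open>B \<in> T\<close> unfolding C_def by blast
      ultimately show ?thesis using source_root[of s s'] s by auto
    qed
    then show "T = C" using T(1) unfolding C_def by blast
  qed (use Union in simp_all)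
  show "cover_graph C = udg S D"
  proof (rule cover_graph_eq_udgI[OF wf_acyclic[OF wf]])
    fix v w :: 'a
    show "(\<exists>A\<in>C. v \<in> A \<and> w \<in> A) \<longleftrightarrow> v \<in> S \<and> w \<in> S \<and> common_ancestor D v w"
    proof
      assume "\<exists>A\<in>C. v \<in> A \<and> w \<in> A"
      then show "v \<in> S \<and> w \<in> S \<and> common_ancestor D v w"
        unfolding C_def common_ancestor_def using descendant_in by blast
    next
      assume "v \<in> S \<and> w \<in> S \<and> common_ancestor D v w"
      then obtain t where t: "(t, v) \<in> D\<^sup>*" "(t, w) \<in> D\<^sup>*" "v \<in> S"
        unfolding common_ancestor_def by blast
      then obtain s where "s \<in> S - Range D" "(s, t) \<in> D\<^sup>*"
        using source_ancestor ancestor_in by blast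
      with t show "\<exists>A\<in>C. v \<in> A \<and> w \<in> A"
        unfolding C_def by (blast intro: rtrancl_trans)
    qed
  qed
qed

theorem proposition2p13:
  fixes n :: nat
  assumes "n \<ge> 1"
  shows "bij_betw cover_graph {C. minimal_cover {1..n} C} {G. UEC_representative n G}"
  unfolding bij_betw_def
proof
  show "inj_on cover_graph {C. minimal_cover {1..n} C}" by (rule inj_on_cover_graph)
  have "cover_graph C \<in> {G. UEC_representative n G}" if "minimal_cover {1..n} C" for C
    using minimal_cover_udg[OF that] unfolding UEC_representative_def by blast
  moreover have "G \<in> cover_graph ` {C. minimal_cover {1..n} C}" if G: "UEC_representative n G" for G
  proof -
    obtain D where D: "dag_on {1..n} D" "G = udg {1..n} D"
      using G unfolding UEC_representative_def by blast
    then have "D \<subseteq> {1..n} \<times> {1..n}" "wf D"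
      using finite_acyclic_wf[OF finite_subset] unfolding dag_on_def by auto
    with source_descendants_minimal_cover D(2) show ?thesis by blast
  qed
  ultimately show "cover_graph ` {C. minimal_cover {1..n} C} = {G. UEC_representative n G}"
    by blast
qed

end
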